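(* Let $G$ be a digraph and $f$ a discrete Morse function on $G$ such that every vertex $v$ with $f(v)=0$ has out-degree $1$ and in-degree $1$. Then for every pair $(\alpha,\beta)\in\mathcal M(G,f)$ there is a vertex $v$ with $f(v)=0$, with unique in-neighbour $u$ and unique out-neighbour $w$ (so $u\to v\to w$), such that one of the following holds: (1) $\alpha=x_1\cdots x_p\,u\,w\,y_1\cdots y_q$ and $\beta=x_1\cdots x_p\,u\,v\,w\,y_1\cdots y_q$ for some (possibly empty) sequences $x_1\cdots x_p$, $y_1\cdots y_q$; (2) $\alpha$ ends at $u$ and $\beta=\alpha v$ (i.e. $\beta=\cdots u\,v$); (3) $\alpha$ starts at $w$ and $\beta=v\alpha$ (i.e. $\beta=v\,w\cdots$).
   Context: A digraph $G=(V,E)$ consists of a set $V$ and $E\subseteq(V\times V)\setminus\{(v,v)\}$; $(u,v)\in E$ is written $u\to v$. The out-degree (in-degree) of $v$ is the number of edges starting (ending) at $v$. An allowed elementary $n$-path is a sequence $v_0\cdots v_n$ of vertices with $v_{i-1}\to v_i\in E$ for $1\le i\le n$. For allowed elementary paths, $\gamma'<\gamma$ means $\gamma'$ is obtained from $\gamma$ by deleting some entries. A map $f:V\to[0,+\infty)$ is a discrete Morse function on $G$ if for every allowed elementary path $v_0\cdots v_n$: (i) there is at most one index $i$ with $f(v_i)=0$ such that $v_0\cdots v_{i-1}v_{i+1}\cdots v_n$ is an allowed elementary $(n-1)$-path; (ii) there is at most one vertex $u$ with $f(u)=0$ such that for some $-1\le j\le n$ the sequence $v_0\cdots v_juv_{j+1}\cdots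 v_n$ (meaning $uv_0\cdots v_n$ if $j=-1$, $v_0\cdots v_nu$ if $j=n$) is an allowed elementary $(n+1)$-path. Set $f(v_0\cdots v_n)=\sum_if(v_i)$. $\mathcal M(G,f)$ is the set of pairs $(\alpha,\beta)$ with $\alpha$ an allowed elementary $n$-path, $\beta$ an allowed elementary $(n+1)$-path for some $n\ge0$, $\alpha<\beta$ and $f(\alpha)=f(\beta)$. *)

theory Defs
  imports Complex_Main "HOL-Library.Sublist"
begin

definition digraph :: "'a set \<Rightarrow> ('a \<times> 'a) set \<Rightarrow> bool" where
  "digraph V E \<longleftrightarrow> E \<subseteq> (V \<times> V) - {(v, v) | v. True}"

definition out_degree :: "('a \<times> 'a) set \<Rightarrow> 'a \<Rightarrow> nat" where
  "out_degree E v = card {w. (v, w) \<in> E}"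

definition in_degree :: "('a \<times> 'a) set \<Rightarrow> 'a \<Rightarrow> nat" where
  "in_degree E v = card {u. (u, v) \<in> E}"

definition allowed_path :: "'a set \<Rightarrow> ('a \<times> 'a) set \<Rightarrow> nat \<Rightarrow> 'a list \<Rightarrow> bool" where
  "allowed_path V E n p \<longleftrightarrow> length p = Suc n \<and> set p \<subseteq> V \<and>
     (\<forall>i < n. (p ! i, p ! Suc i) \<in> E)"

definition discrete_morse :: "'a set \<Rightarrow> ('a \<times> 'a) set \<Rightarrow> ('a \<Rightarrow> real) \<Rightarrow> bool" where
  "discrete_morse V E f \<longleftrightarrow>
     (\<forall>v\<in>V. f v \<ge> 0) \<and>
     (\<forall>n p. allowed_path V E n p \<longrightarrow>
        (\<forall>i j. i \<le> n \<and> j \<le> n \<and> f (p ! i) = 0 \<and> f (p ! j) = 0 \<and>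
               n \<ge> 1 \<and> allowed_path V E (n - 1) (take i p @ drop (Suc i) p) \<and>
               allowed_path V E (n - 1) (take j p @ drop (Suc j) p) \<longrightarrow> i = j)) \<and>
     (\<forall>n p. allowed_path V E n p \<longrightarrow>
        (\<forall>u u'. u \<in> V \<and> u' \<in> V \<and> f u = 0 \<and> f u' = 0 \<and>
               (\<exists>k \<le> Suc n. allowed_path V E (Suc n) (take k p @ u # drop k p)) \<and>
               (\<exists>k \<le> Suc n. allowed_path V E (Suc n) (take k p @ u' # drop k p)) \<longrightarrow> u = u'))"

definition path_value :: "('a \<Rightarrow> real) \<Rightarrow> 'a list \<Rightarrow> real" where
  "path_value f p = sum_list (map f p)"

definition morse_pairs :: "'a set \<Rightarrow> ('a \<times> 'a) set \<Rightarrow> ('a \<Rightarrow> real) \<Rightarrow> ('a list \<times> 'a list) set" where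
  "morse_pairs V E f = {(\<alpha>, \<beta>). \<exists>n. allowed_path V E n \<alpha> \<and> allowed_path V E (Suc n) \<beta> \<and>
      subseq \<alpha> \<beta> \<and> path_value f \<alpha> = path_value f \<beta>}"

end

theory Submission
  imports Defs
begin

text \<open>Since \<open>\<beta>\<close> has exactly one entry more than its subsequence \<open>\<alpha>\<close>, it arises from \<open>\<alpha>\<close>
  by inserting a single vertex \<open>v\<close>, and \<open>f(\<alpha>) = f(\<beta>)\<close> forces \<open>f v = 0\<close>. The neighbours
  of \<open>v\<close> inside \<open>\<beta>\<close> are joined to it by edges of \<open>\<beta>\<close>; where \<open>v\<close> is an end of \<open>\<beta>\<close>,
  the missing neighbour is supplied by the degree hypothesis.\<close>

lemma subseq_Suc_length_insert:
  assumes "subseq a b" and "length b = Suc (length a)"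
  obtains xs v ys where "a = xs @ ys" and "b = xs @ v # ys"
proof -
  from assms have "\<exists>xs v ys. a = xs @ ys \<and> b = xs @ v # ys"
  proof (induction b arbitrary: a rule: list.induct)
    case Nil
    then show ?case by simp
  next
    case (Cons c b)
    note prems = Cons.prems and IH = Cons.IH
    show ?case
    proof (cases a)
      case Nil
      with prems(2) have "a = [] @ []" and "c # b = [] @ c # []"
        by simp_all
      then show ?thesis by blast
    next
      case (Cons x as)
      show ?thesis
      proof (cases "x = c")
        case True
        with Cons prems have "subseq as b" and "length b = Suc (length as)"
          by simp_all
        then obtain xs v ys where "as = xs @ ys" and "b = xs @ v # ys"
          using IH by blast
        with Cons True have "a = (c # xs) @ ys" and "c # b = (c # xs) @ v # ys"
          by simp_all
        then show ?thesis by blast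
      next
        case False
        with Cons prems(1) have "subseq a b"
          by simp
        moreover have "length a = length b"
          using prems(2) by simp
        ultimately have "a = b"
          by (rule subseq_same_length)
        then have "a = [] @ a" and "c # b = [] @ c # a"
          by simp_all
        then show ?thesis by blast
      qed
    qed
  qed
  with that show ?thesis by blast
qed

lemma path_value_insert:
  "path_value f (xs @ v # ys) = path_value f (xs @ ys) + f v"
  by (simp add: path_value_def)

lemma allowed_path_edge:
  assumes "allowed_path V E n (xs @ x # y # ys)"
  shows "(x, y) \<in> E"
proof -
  have "length xs < n"
    using assms by (simp add: allowed_path_def)
  with assms have "((xs @ x # y # ys) ! length xs, (xs @ x # y # ys) ! Suc (length xs)) \<in> E"
    unfolding allowed_path_def by blast
  then show ?thesis
    by (simp add: nth_append)
qed

lemma in_degree_nonzero_obtain_edge: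
  assumes "in_degree E v \<noteq> 0"
  obtains u where "(u, v) \<in> E"
  using assms by (metis Collect_empty_eq card.empty in_degree_def)

lemma out_degree_nonzero_obtain_edge:
  assumes "out_degree E v \<noteq> 0"
  obtains w where "(v, w) \<in> E"
  using assms by (metis Collect_empty_eq card.empty out_degree_def)

lemma allowed_path_insert_cases:
  assumes path: "allowed_path V E n \<beta>"
    and \<alpha>: "\<alpha> = xs @ ys" and \<beta>: "\<beta> = xs @ v # ys" and "\<alpha> \<noteq> []"
    and "(u\<^sub>0, v) \<in> E" and "(v, w\<^sub>0) \<in> E"
  shows "\<exists>u w. (u, v) \<in> E \<and> (v, w) \<in> E \<and>
           ((\<exists>xs ys. \<alpha> = xs @ [u, w] @ ys \<and> \<beta> = xs @ [u, v, w] @ ys) \<or>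
            (\<exists>xs. \<alpha> = xs @ [u] \<and> \<beta> = \<alpha> @ [v]) \<or>
            (\<exists>ys. \<alpha> = w # ys \<and> \<beta> = v # \<alpha>))"
proof (cases xs rule: rev_cases)
  case Nil
  with \<alpha> \<open>\<alpha> \<noteq> []\<close> obtain w ys' where "ys = w # ys'"
    by (cases ys) auto
  with Nil \<alpha> \<beta> have "\<alpha> = w # ys'" and "\<beta> = v # \<alpha>" and "(v, w) \<in> E"
    using path allowed_path_edge[of V E n "[]" v w ys'] by simp_all
  with \<open>(u\<^sub>0, v) \<in> E\<close> show ?thesis by blast
next
  case (snoc xs' u)
  with path \<beta> have "(u, v) \<in> E"
    using allowed_path_edge[of V E n xs' u v ys] by simp
  show ?thesis
  proof (cases ys)
    case Nil
    with snoc \<alpha> \<beta> have "\<alpha> = xs' @ [u]" and "\<beta> = \<alpha> @ [v]"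
      by simp_all
    with \<open>(u, v) \<in> E\<close> \<open>(v, w\<^sub>0) \<in> E\<close> show ?thesis by blast
  next
    case (Cons w ys')
    with snoc \<alpha> \<beta> have "\<alpha> = xs' @ [u, w] @ ys'" and "\<beta> = xs' @ [u, v, w] @ ys'"
      by simp_all
    moreover from \<open>\<beta> = xs' @ [u, v, w] @ ys'\<close> path have "(v, w) \<in> E"
      using allowed_path_edge[of V E n "xs' @ [u]" v w ys'] by simp
    ultimately show ?thesis
      using \<open>(u, v) \<in> E\<close> by blast
  qed
qed

theorem lemma6p1:
  fixes V :: "'a set" and E :: "('a \<times> 'a) set" and f :: "'a \<Rightarrow> real"
  assumes "digraph V E"
    and "discrete_morse V E f"
    and "\<forall>v\<in>V. f v = 0 \<longrightarrow> out_degree E v = 1 \<and> in_degree E v = 1"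
    and "(\<alpha>, \<beta>) \<in> morse_pairs V E f"
  shows "\<exists>v\<in>V. f v = 0 \<and> (\<exists>u w. (u, v) \<in> E \<and> (v, w) \<in> E \<and>
           ((\<exists>xs ys. \<alpha> = xs @ [u, w] @ ys \<and> \<beta> = xs @ [u, v, w] @ ys) \<or>
            (\<exists>xs. \<alpha> = xs @ [u] \<and> \<beta> = \<alpha> @ [v]) \<or>
            (\<exists>ys. \<alpha> = w # ys \<and> \<beta> = v # \<alpha>)))"
proof -
  obtain n where path_\<alpha>: "allowed_path V E n \<alpha>" and path_\<beta>: "allowed_path V E (Suc n) \<beta>"
    and "subseq \<alpha> \<beta>" and "path_value f \<alpha> = path_value f \<beta>"
    using assms(4) unfolding morse_pairs_def by blast
  moreover have "length \<beta> = Suc (length \<alpha>)"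
    using path_\<alpha> path_\<beta> by (simp add: allowed_path_def)
  ultimately obtain xs v ys where \<alpha>: "\<alpha> = xs @ ys" and \<beta>: "\<beta> = xs @ v # ys"
    by (meson subseq_Suc_length_insert)
  have "f v = 0"
    using \<open>path_value f \<alpha> = path_value f \<beta>\<close> by (simp add: \<alpha> \<beta> path_value_insert)
  moreover have "v \<in> V"
    using path_\<beta> by (auto simp: \<beta> allowed_path_def)
  moreover obtain u w where "(u, v) \<in> E" and "(v, w) \<in> E"
    using assms(3) \<open>v \<in> V\<close> \<open>f v = 0\<close>
    by (metis in_degree_nonzero_obtain_edge out_degree_nonzero_obtain_edge one_neq_zero)
  moreover have "\<alpha> \<noteq> []"
    using path_\<alpha> by (auto simp: allowed_path_def)
  ultimately show ?thesis
    using allowed_path_insert_cases[OF path_\<beta> \<alpha> \<beta>] by blast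
qed

end
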